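(* Let $c_k\in(0,1)$, $l_k>0$ decreasing to $0$, $I_k$ the open interval of length $l_k$ centered at $c_k$, and assume (A1) and (A3) below. Let $f\in C([0,1])$, let $\mu_k=\frac{1}{|I_k|}f(x)\,dx|_{I_k}$ (with $dx$ Lebesgue measure restricted to $[0,1]$), $\mu_{\mathcal{A}_n}=\frac{1}{\#\mathcal{A}_n}\sum_{k\in\mathcal{A}_n}\mu_k$ and $V_n=\bigcup_{k\in\mathcal{A}_n}I_k$. Then $\mu_{\mathcal{A}_n}(V_n)=\int_0^1 f(x)\phi(x)\,dx+o(1)$ as $n\to\infty$.
   Context: Notation: $\mathcal{A}_n=\{n,\dots,2n-1\}$, $\mathcal{A}_{n,q}=\mathcal{A}_n\cup\mathcal{A}_{2n}\cup\cdots\cup\mathcal{A}_{2^qn}$. (A1) There is $\phi\in L^1([0,1],dx)$, $\phi>0$ a.e., with $\frac{1}{\#\mathcal{A}_n}\sum_{k\in\mathcal{A}_n}g(c_k)\to\int_0^1 g\phi\,dx$ for every $g\in C([0,1])$; $\phi$ in the claim is this function. (A3) There are integers $q(n)\to\infty$ such that for every $\varepsilon>0$, for all large $n$ and all $i\ne j$ in $\mathcal{A}_{n,q(n)}$, $\frac{l_i+l_j}{2|c_i-c_j|}<\varepsilon$. *)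

theory Defs
  imports "HOL-Analysis.Analysis"
begin

definition blockA :: "nat \<Rightarrow> nat set" where
  "blockA n = {n..<2*n}"

definition blockAq :: "nat \<Rightarrow> nat \<Rightarrow> nat set" where
  "blockAq n q = (\<Union>m\<in>{0..q}. blockA (2^m * n))"

definition intI :: "(nat \<Rightarrow> real) \<Rightarrow> (nat \<Rightarrow> real) \<Rightarrow> nat \<Rightarrow> real set" where
  "intI c l k = {c k - l k / 2 <..< c k + l k / 2}"

definition muk :: "(nat \<Rightarrow> real) \<Rightarrow> (nat \<Rightarrow> real) \<Rightarrow> (real \<Rightarrow> real) \<Rightarrow> nat \<Rightarrow> real set \<Rightarrow> real" where
  "muk c l f k S = (1 / l k) * (LINT x : (S \<inter> intI c l k \<inter> {0..1}) | lborel. f x)"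

definition muA :: "(nat \<Rightarrow> real) \<Rightarrow> (nat \<Rightarrow> real) \<Rightarrow> (real \<Rightarrow> real) \<Rightarrow> nat \<Rightarrow> real set \<Rightarrow> real" where
  "muA c l f n S = (1 / real (card (blockA n))) * (\<Sum>k\<in>blockA n. muk c l f k S)"

definition setV :: "(nat \<Rightarrow> real) \<Rightarrow> (nat \<Rightarrow> real) \<Rightarrow> nat \<Rightarrow> real set" where
  "setV c l n = (\<Union>k\<in>blockA n. intI c l k)"

end

theory Submission
  imports Defs
begin

text \<open>
  Every \<open>I\<^sub>k\<close> with \<open>k \<in> A\<^sub>n\<close> lies in \<open>V\<^sub>n\<close>, so \<open>\<mu>\<^sub>k(V\<^sub>n)\<close> is the integral of \<open>f\<close> over
  \<open>I\<^sub>k \<inter> [0,1]\<close> divided by \<open>l\<^sub>k\<close>. By uniform continuity this is \<open>f(c\<^sub>k) + o(1)\<close> when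
  \<open>I\<^sub>k \<subseteq> [0,1]\<close>, and in any case it is within \<open>sup |f| + o(1)\<close> of \<open>f(c\<^sub>k)\<close>. The intervals
  sticking out of \<open>[0,1]\<close> have centres within \<open>\<delta>\<close> of the boundary; applying (A1) to a
  continuous cutoff that equals 1 there bounds their proportion in \<open>A\<^sub>n\<close> eventually by the
  \<open>\<phi>\<close>-integral of the cutoff, which is small because \<open>\<phi>\<close> is integrable. Finally (A1)
  for \<open>f\<close> itself gives the limit \<open>\<integral> f \<phi>\<close>.
\<close>

text \<open>A continuous substitute for the indicator of the \<open>d\<close>-neighbourhood of \<open>{0, 1}\<close>,
  so that (A1) can be applied to it.\<close>
definition edge_cutoff :: "real \<Rightarrow> real \<Rightarrow> real" where
  "edge_cutoff d x = max 0 (min 1 (2 - min x (1 - x) / d))"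

lemma continuous_on_edge_cutoff: "continuous_on A (edge_cutoff d)"
  unfolding edge_cutoff_def divide_inverse by (intro continuous_intros)

lemma borel_measurable_edge_cutoff [measurable]: "edge_cutoff d \<in> borel_measurable borel"
  by (intro borel_measurable_continuous_onI continuous_on_edge_cutoff)

lemma edge_cutoff_nonneg: "0 \<le> edge_cutoff d x"
  and edge_cutoff_le_1: "edge_cutoff d x \<le> 1"
  unfolding edge_cutoff_def by auto

lemma edge_cutoff_eq_1: "d > 0 \<Longrightarrow> min x (1 - x) \<le> d \<Longrightarrow> edge_cutoff d x = 1"
  unfolding edge_cutoff_def by (simp add: divide_le_eq)

lemma edge_cutoff_eq_0: "d > 0 \<Longrightarrow> 2 * d \<le> min x (1 - x) \<Longrightarrow> edge_cutoff d x = 0"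
  unfolding edge_cutoff_def by (simp add: le_divide_eq)

lemma edge_cutoff_eventually_0:
  assumes "x \<in> {0<..<1}"
  shows "\<forall>\<^sub>F m in sequentially. edge_cutoff (1 / Suc m) x = 0"
proof -
  have "(\<lambda>m. 2 / real (Suc m)) \<longlonglongrightarrow> 0"
    by (rule LIMSEQ_Suc[OF lim_const_over_n])
  moreover have "min x (1 - x) > 0" using assms by simp
  ultimately have "\<forall>\<^sub>F m in sequentially. 2 / real (Suc m) < min x (1 - x)"
    by (rule order_tendstoD(2))
  then show ?thesis
    by eventually_elim (simp add: edge_cutoff_eq_0)
qed

lemma tendsto_set_integral_edge_cutoff:
  fixes \<phi> :: "real \<Rightarrow> real"
  assumes \<phi>: "set_integrable lborel {0..1} \<phi>"
  shows "(\<lambda>m. LINT x:{0..1}|lborel. edge_cutoff (1 / Suc m) x * \<phi> x) \<longlonglongrightarrow> 0"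
proof -
  define g where "g x = indicator {0..1} x *\<^sub>R \<phi> x" for x
  have g: "integrable lborel g"
    using \<phi> unfolding set_integrable_def g_def .
  have "(\<lambda>m. LINT x|lborel. edge_cutoff (1 / Suc m) x * g x) \<longlonglongrightarrow> (LINT (x::real)|lborel. 0::real)"
  proof (rule integral_dominated_convergence[where w = "\<lambda>x. norm (g x)"])
    show "(\<lambda>x. edge_cutoff (1 / Suc m) x * g x) \<in> borel_measurable lborel" for m
      using borel_measurable_integrable[OF g] by measurable
    show "AE x in lborel. norm (edge_cutoff (1 / Suc m) x * g x) \<le> norm (g x)" for m
      using edge_cutoff_nonneg edge_cutoff_le_1
      by (auto simp: abs_mult intro!: mult_left_le_one_le)
    show "AE x in lborel. (\<lambda>m. edge_cutoff (1 / Suc m) x * g x) \<longlonglongrightarrow> 0"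
      using AE_lborel_singleton[of 0] AE_lborel_singleton[of 1]
    proof eventually_elim
      case (elim x)
      show ?case
      proof (cases "x \<in> {0<..<1}")
        case True
        then show ?thesis
          using edge_cutoff_eventually_0 by (auto intro: tendsto_eventually eventually_mono)
      next
        case False
        then have "g x = 0" using elim by (auto simp: g_def)
        then show ?thesis by simp
      qed
    qed
  qed (use g in auto)
  moreover have "edge_cutoff d x * g x = indicator {0..1} x *\<^sub>R (edge_cutoff d x * \<phi> x)" for d x
    by (simp add: g_def)
  ultimately show ?thesis
    by (simp add: set_lebesgue_integral_def)
qed

lemma set_integral_edge_cutoff_less:
  fixes \<phi> :: "real \<Rightarrow> real"
  assumes "set_integrable lborel {0..1} \<phi>" and "e > 0"
  shows "\<exists>\<delta>>0. (LINT x:{0..1}|lborel. edge_cutoff \<delta> x * \<phi> x) < e"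
proof -
  obtain m where "(LINT x:{0..1}|lborel. edge_cutoff (1 / Suc m) x * \<phi> x) < e"
    using order_tendstoD(2)[OF tendsto_set_integral_edge_cutoff[OF assms(1)] assms(2)]
    by (auto simp: eventually_sequentially)
  then show ?thesis
    by (intro exI[of _ "1 / Suc m"]) simp
qed

lemma set_integral_deviation_le:
  fixes f :: "'a \<Rightarrow> real"
  assumes A: "A \<in> sets M" "emeasure M A < \<infinity>" and f: "set_integrable M A f"
    and dev: "\<And>x. x \<in> A \<Longrightarrow> \<bar>f x - a\<bar> \<le> \<epsilon>"
  shows "\<bar>(LINT x:A|M. f x) - a * measure M A\<bar> \<le> \<epsilon> * measure M A"
proof -
  have const: "set_integrable M A (\<lambda>_. b)" for b :: real
    using A by (simp add: set_integrable_def)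
  have "(LINT x:A|M. f x) - a * measure M A = (LINT x:A|M. f x - a)"
    using A f const by (simp add: set_integral_const)
  also have "\<bar>\<dots>\<bar> \<le> (LINT x:A|M. \<bar>f x - a\<bar>)"
    using set_integral_norm_bound[of M A "\<lambda>x. f x - a"] f const by simp
  also have "\<dots> \<le> (LINT x:A|M. \<epsilon>)"
    using f const dev by (intro set_integral_mono set_integrable_abs) auto
  also have "\<dots> = \<epsilon> * measure M A"
    using A by (simp add: set_integral_const)
  finally show ?thesis .
qed

text \<open>The value of \<open>\<mu>\<^sub>k\<close> on any set containing \<open>I\<^sub>k\<close>: the window is clipped
  to \<open>[0,1]\<close> but still normalised by its full length \<open>L\<close>.\<close>
definition window_average :: "(real \<Rightarrow> real) \<Rightarrow> real \<Rightarrow> real \<Rightarrow> real" where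
  "window_average f c L = (1 / L) * (LINT x:{c - L/2<..<c + L/2} \<inter> {0..1}|lborel. f x)"

lemma measure_clipped_window_le:
  assumes "0 < L"
  shows "measure lborel ({c - L/2<..<c + L/2} \<inter> {0..1}) \<le> L"
proof -
  have "measure lborel ({c - L/2<..<c + L/2} \<inter> {0..1}) \<le> measure lborel {c - L/2<..<c + L/2}"
    using assms by (intro measure_mono_fmeasurable) (auto simp: fmeasurable_def)
  then show ?thesis
    using assms by simp
qed

lemma window_average_deviation_le:
  fixes f :: "real \<Rightarrow> real" and c L :: real
  defines "m \<equiv> measure lborel ({c - L/2<..<c + L/2} \<inter> {0..1})"
  assumes f_cont: "continuous_on {0..1} f" and L: "0 < L"
    and dev: "\<And>x. x \<in> {c - L/2<..<c + L/2} \<inter> {0..1} \<Longrightarrow> \<bar>f x - f c\<bar> \<le> \<epsilon>"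
  shows "\<bar>window_average f c L - f c\<bar> \<le> \<epsilon> * (m / L) + \<bar>f c\<bar> * (1 - m / L)"
proof -
  define W where "W = {c - L/2<..<c + L/2} \<inter> {0..1}"
  have "emeasure lborel W \<le> emeasure lborel {0..1::real}"
    by (rule emeasure_mono) (auto simp: W_def)
  then have fin: "emeasure lborel W < \<infinity>"
    by (simp add: order_le_less_trans)
  have "set_integrable lborel {0..1} f"
    unfolding set_integrable_def by (rule borel_integrable_compact[OF compact_Icc f_cont])
  then have "set_integrable lborel W f"
    by (rule set_integrable_subset) (auto simp: W_def)
  moreover have "m = measure lborel W"
    by (simp add: m_def W_def)
  ultimately have "\<bar>(LINT x:W|lborel. f x) - f c * m\<bar> \<le> \<epsilon> * m"
    using fin dev by (auto simp: W_def intro: set_integral_deviation_le)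
  then have dev_avg: "\<bar>(LINT x:W|lborel. f x) - f c * m\<bar> / L \<le> \<epsilon> * (m / L)"
    using L by (simp add: divide_right_mono)
  have "m / L \<le> 1"
    using measure_clipped_window_le[OF L, of c] L by (simp add: m_def)
  have "window_average f c L - f c = ((LINT x:W|lborel. f x) - f c * m) / L - f c * (1 - m / L)"
    using L by (simp add: window_average_def W_def field_simps)
  also have "\<bar>\<dots>\<bar> \<le> \<bar>((LINT x:W|lborel. f x) - f c * m) / L\<bar> + \<bar>f c * (1 - m / L)\<bar>"
    by (rule abs_triangle_ineq4)
  also have "\<dots> = \<bar>(LINT x:W|lborel. f x) - f c * m\<bar> / L + \<bar>f c\<bar> * (1 - m / L)"
    using L \<open>m / L \<le> 1\<close> by (simp add: abs_mult)
  finally show ?thesis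
    using dev_avg by linarith
qed

lemma window_average_error_le:
  fixes f :: "real \<Rightarrow> real"
  assumes f_cont: "continuous_on {0..1} f" and f_bound: "\<forall>x\<in>{0..1}. \<bar>f x\<bar> \<le> M"
    and f_osc: "\<forall>x\<in>{0..1}. \<forall>y\<in>{0..1}. \<bar>x - y\<bar> < \<eta> \<longrightarrow> \<bar>f x - f y\<bar> \<le> \<epsilon>"
    and c: "c \<in> {0<..<1}" and L: "0 < L" "L < 2 * \<eta>" "L \<le> 2 * \<delta>"
  shows "\<bar>window_average f c L - f c\<bar> \<le> \<epsilon> + M * edge_cutoff \<delta> c"
proof -
  define m where "m = measure lborel ({c - L/2<..<c + L/2} \<inter> {0..1})"
  have err: "\<bar>window_average f c L - f c\<bar> \<le> \<epsilon> * (m / L) + \<bar>f c\<bar> * (1 - m / L)"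
    unfolding m_def using f_osc c L by (intro window_average_deviation_le f_cont) auto
  have ratio: "0 \<le> m / L" "m / L \<le> 1"
    using measure_clipped_window_le[OF L(1), of c] L by (auto simp: m_def)
  have \<epsilon>: "0 \<le> \<epsilon>"
    using f_osc[rule_format, of c c] c L by simp
  have M: "\<bar>f c\<bar> \<le> M"
    using f_bound c by auto
  show ?thesis
  proof (cases "{c - L/2<..<c + L/2} \<subseteq> {0..1}")
    case True
    then have "m = L"
      using L by (simp add: m_def Int_absorb2)
    moreover have "0 \<le> M * edge_cutoff \<delta> c"
      using M edge_cutoff_nonneg[of \<delta> c] by simp
    ultimately show ?thesis
      using err L by simp
  next
    case False
    then have "min c (1 - c) \<le> \<delta>"
      using L by auto
    then have "edge_cutoff \<delta> c = 1"
      using L by (intro edge_cutoff_eq_1) auto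
    moreover have "\<epsilon> * (m / L) \<le> \<epsilon>"
      by (rule mult_left_le[OF ratio(2) \<epsilon>])
    moreover have "\<bar>f c\<bar> * (1 - m / L) \<le> \<bar>f c\<bar>"
      using ratio by (intro mult_left_le) auto
    ultimately show ?thesis
      using err M by simp
  qed
qed

lemma card_blockA [simp]: "card (blockA n) = n"
  by (simp add: blockA_def)

lemma muA_setV:
  "muA c l f n (setV c l n) = (1 / real n) * (\<Sum>k\<in>blockA n. window_average f (c k) (l k))"
proof -
  have "muk c l f k (setV c l n) = window_average f (c k) (l k)" if "k \<in> blockA n" for k
  proof -
    have "setV c l n \<inter> intI c l k = intI c l k"
      using that by (auto simp: setV_def)
    then show ?thesis
      by (simp add: muk_def window_average_def intI_def)
  qed
  then show ?thesis
    by (simp add: muA_def)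
qed

lemma block_window_error_eventually_le:
  fixes c l :: "nat \<Rightarrow> real" and f \<phi> :: "real \<Rightarrow> real"
  assumes c_range: "\<And>k. c k \<in> {0<..<1}" and l_pos: "\<And>k. l k > 0" and l_dec: "decseq l"
    and l_lim: "l \<longlonglongrightarrow> 0" and \<phi>_int: "set_integrable lborel {0..1} \<phi>"
    and equidistributed: "\<And>g. continuous_on {0..1} g \<Longrightarrow>
      (\<lambda>n. (1 / real n) * (\<Sum>k\<in>blockA n. g (c k))) \<longlonglongrightarrow> (LINT x:{0..1}|lborel. g x * \<phi> x)"
    and f_cont: "continuous_on {0..1} f" and f_bound: "\<forall>x\<in>{0..1}. \<bar>f x\<bar> \<le> M"
    and \<epsilon>: "\<epsilon> > 0"
  shows "\<forall>\<^sub>F n in sequentially.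
    (1 / real n) * (\<Sum>k\<in>blockA n. \<bar>window_average f (c k) (l k) - f (c k)\<bar>) \<le> \<epsilon> * (1 + 2 * M)"
proof -
  have M: "0 \<le> M"
    using f_bound[rule_format, of 0] by (auto simp: abs_le_iff)
  obtain \<eta> where \<eta>: "\<eta> > 0"
    and f_osc: "\<forall>x\<in>{0..1}. \<forall>y\<in>{0..1}. \<bar>x - y\<bar> < \<eta> \<longrightarrow> \<bar>f x - f y\<bar> \<le> \<epsilon>"
    using compact_uniformly_continuous[OF f_cont compact_Icc] \<epsilon>
    unfolding uniformly_continuous_on_def dist_real_def by (meson less_imp_le)
  obtain \<delta> where \<delta>: "\<delta> > 0"
    and cutoff_small: "(LINT x:{0..1}|lborel. edge_cutoff \<delta> x * \<phi> x) < 2 * \<epsilon>"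
    using set_integral_edge_cutoff_less[OF \<phi>_int, of "2 * \<epsilon>"] \<epsilon> by auto
  have "\<forall>\<^sub>F n in sequentially. (1 / real n) * (\<Sum>k\<in>blockA n. edge_cutoff \<delta> (c k)) < 2 * \<epsilon>"
    using order_tendstoD(2)[OF equidistributed[OF continuous_on_edge_cutoff] cutoff_small] .
  moreover have "\<forall>\<^sub>F n in sequentially. l n < min (2 * \<eta>) (2 * \<delta>)"
    using order_tendstoD(2)[OF l_lim, of "min (2 * \<eta>) (2 * \<delta>)"] \<eta> \<delta> by simp
  moreover have "\<forall>\<^sub>F n in sequentially. n > 0"
    by (rule eventually_gt_at_top)
  ultimately show ?thesis
  proof eventually_elim
    case (elim n)
    have "\<bar>window_average f (c k) (l k) - f (c k)\<bar> \<le> \<epsilon> + M * edge_cutoff \<delta> (c k)"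
      if "k \<in> blockA n" for k
    proof -
      have "l k \<le> l n"
        using that l_dec by (auto simp: blockA_def intro: decseqD)
      then show ?thesis
        using elim by (intro window_average_error_le[OF f_cont f_bound f_osc c_range l_pos]) auto
    qed
    then have "(1 / real n) * (\<Sum>k\<in>blockA n. \<bar>window_average f (c k) (l k) - f (c k)\<bar>)
        \<le> (1 / real n) * (\<Sum>k\<in>blockA n. \<epsilon> + M * edge_cutoff \<delta> (c k))"
      by (intro mult_left_mono sum_mono) auto
    also have "\<dots> = \<epsilon> + M * ((1 / real n) * (\<Sum>k\<in>blockA n. edge_cutoff \<delta> (c k)))"
      using elim by (simp add: sum.distrib sum_distrib_left[symmetric] field_simps)
    also have "\<dots> \<le> \<epsilon> + M * (2 * \<epsilon>)"
      using elim M by (intro add_left_mono mult_left_mono) auto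
    finally show ?case
      by (simp add: algebra_simps)
  qed
qed

lemma block_window_error_tendsto_0:
  fixes c l :: "nat \<Rightarrow> real" and f \<phi> :: "real \<Rightarrow> real"
  assumes c_range: "\<And>k. c k \<in> {0<..<1}" and l_pos: "\<And>k. l k > 0" and l_dec: "decseq l"
    and l_lim: "l \<longlonglongrightarrow> 0" and \<phi>_int: "set_integrable lborel {0..1} \<phi>"
    and equidistributed: "\<And>g. continuous_on {0..1} g \<Longrightarrow>
      (\<lambda>n. (1 / real n) * (\<Sum>k\<in>blockA n. g (c k))) \<longlonglongrightarrow> (LINT x:{0..1}|lborel. g x * \<phi> x)"
    and f_cont: "continuous_on {0..1} f"
  shows "(\<lambda>n. (1 / real n) * (\<Sum>k\<in>blockA n. \<bar>window_average f (c k) (l k) - f (c k)\<bar>))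
    \<longlonglongrightarrow> 0"
proof (rule tendstoI)
  fix r :: real
  assume r: "r > 0"
  obtain M where f_bound: "\<forall>x\<in>{0..1}. \<bar>f x\<bar> \<le> M"
    using compact_imp_bounded[OF compact_continuous_image[OF f_cont compact_Icc]]
    by (auto simp: bounded_iff)
  have M: "0 \<le> M"
    using f_bound[rule_format, of 0] by (auto simp: abs_le_iff)
  define \<epsilon> where "\<epsilon> = r / (2 * (1 + 2 * M))"
  have \<epsilon>: "\<epsilon> > 0"
    using r M by (simp add: \<epsilon>_def)
  have small: "\<epsilon> * (1 + 2 * M) < r"
    using r M by (simp add: \<epsilon>_def field_simps add_pos_nonneg)
  have "\<forall>\<^sub>F n in sequentially.
      (1 / real n) * (\<Sum>k\<in>blockA n. \<bar>window_average f (c k) (l k) - f (c k)\<bar>) \<le> \<epsilon> * (1 + 2 * M)"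
    by (rule block_window_error_eventually_le[OF c_range l_pos l_dec l_lim \<phi>_int equidistributed
          f_cont f_bound \<epsilon>])
  then show "\<forall>\<^sub>F n in sequentially.
      dist ((1 / real n) * (\<Sum>k\<in>blockA n. \<bar>window_average f (c k) (l k) - f (c k)\<bar>)) 0 < r"
  proof eventually_elim
    case (elim n)
    then show ?case
      using small by (simp add: sum_nonneg)
  qed
qed

theorem lemma4p5:
  fixes c l :: "nat \<Rightarrow> real" and f \<phi> :: "real \<Rightarrow> real"
  assumes c_range: "\<And>k. c k \<in> {0<..<1}"
    and l_pos: "\<And>k. l k > 0"
    and l_dec: "decseq l"
    and l_lim: "l \<longlonglongrightarrow> 0"
    and A1_int: "set_integrable lborel {0..1} \<phi>"
    and A1_pos: "AE x in lborel. x \<in> {0..1} \<longrightarrow> \<phi> x > 0"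
    and A1_lim: "\<And>g. continuous_on {0..1} g \<Longrightarrow>
        (\<lambda>n. (1 / real (card (blockA n))) * (\<Sum>k\<in>blockA n. g (c k)))
          \<longlonglongrightarrow> (LINT x : {0..1} | lborel. g x * \<phi> x)"
    and A3: "\<exists>q :: nat \<Rightarrow> nat. filterlim q at_top sequentially \<and>
        (\<forall>\<epsilon>>0. \<forall>\<^sub>F n in sequentially. \<forall>i\<in>blockAq n (q n). \<forall>j\<in>blockAq n (q n).
            i \<noteq> j \<longrightarrow> l i + l j < 2 * \<epsilon> * \<bar>c i - c j\<bar>)"
    and f_cont: "continuous_on {0..1} f"
  shows "(\<lambda>n. muA c l f n (setV c l n) - (LINT x : {0..1} | lborel. f x * \<phi> x))
           \<longlonglongrightarrow> 0"
proof -
  define W where "W k = window_average f (c k) (l k)" for k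
  have equidistributed: "\<And>g. continuous_on {0..1} g \<Longrightarrow>
      (\<lambda>n. (1 / real n) * (\<Sum>k\<in>blockA n. g (c k))) \<longlonglongrightarrow> (LINT x:{0..1}|lborel. g x * \<phi> x)"
    using A1_lim by simp
  have "(\<lambda>n. (1 / real n) * (\<Sum>k\<in>blockA n. \<bar>W k - f (c k)\<bar>)) \<longlonglongrightarrow> 0"
    unfolding W_def
    by (rule block_window_error_tendsto_0[OF c_range l_pos l_dec l_lim A1_int equidistributed f_cont])
  then have "(\<lambda>n. (1 / real n) * (\<Sum>k\<in>blockA n. W k - f (c k))) \<longlonglongrightarrow> 0"
    by (rule Lim_null_comparison[rotated])
      (auto intro!: always_eventually divide_right_mono)
  moreover have "(\<lambda>n. (1 / real n) * (\<Sum>k\<in>blockA n. f (c k))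
      - (LINT x:{0..1}|lborel. f x * \<phi> x)) \<longlonglongrightarrow> 0"
    by (rule LIM_zero[OF equidistributed[OF f_cont]])
  ultimately have "(\<lambda>n. (1 / real n) * (\<Sum>k\<in>blockA n. W k - f (c k))
      + ((1 / real n) * (\<Sum>k\<in>blockA n. f (c k)) - (LINT x:{0..1}|lborel. f x * \<phi> x))) \<longlonglongrightarrow> 0"
    by (rule tendsto_add_zero)
  then show ?thesis
    by (simp add: muA_setV W_def sum_subtractf algebra_simps)
qed

end
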